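(* For every $n\in\mathbb{N}$, the number of labeled split graphs with vertex set $[n]$ whose questioning set has size at least $2$ equals $$2\sum_{q=2}^{n}\sum_{c=0}^{n-q}\binom{n}{q}\binom{n-q}{c}\big(2^{\,n-c-q}-1\big)^{c},$$ with the convention $0^0=1$.
   Context: $[n]=\{1,\dots,n\}$; labeled graphs on $[n]$ are distinct if their edge sets differ. A split partition of a graph $G$ is an ordered pair $(C',I')$ of disjoint sets (possibly empty) with $C'\cup I'=V(G)$, $C'$ a clique and $I'$ an independent set; $G$ is a split graph if it has a split partition. The questioning set of a split graph is the set of vertices $v$ for which there is a split partition with $v\in C'$ and a split partition with $v\in I'$. *)

theory Defs
  imports Main
begin

text \<open>Labeled simple graphs on vertex set [n] = {1..n}, represented by their edge sets
  (sets of 2-element subsets of {1..n}).\<close>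

definition all_edges :: "nat \<Rightarrow> nat set set" where
  "all_edges n = {e. \<exists>u v. e = {u, v} \<and> u \<noteq> v \<and> u \<in> {1..n} \<and> v \<in> {1..n}}"

definition is_clique :: "nat set set \<Rightarrow> nat set \<Rightarrow> bool" where
  "is_clique E C \<longleftrightarrow> (\<forall>u\<in>C. \<forall>v\<in>C. u \<noteq> v \<longrightarrow> {u, v} \<in> E)"

definition is_indep :: "nat set set \<Rightarrow> nat set \<Rightarrow> bool" where
  "is_indep E I \<longleftrightarrow> (\<forall>u\<in>I. \<forall>v\<in>I. {u, v} \<notin> E)"

definition split_partition :: "nat \<Rightarrow> nat set set \<Rightarrow> nat set \<Rightarrow> nat set \<Rightarrow> bool" where
  "split_partition n E C I \<longleftrightarrow>
     C \<inter> I = {} \<and> C \<union> I = {1..n} \<and> is_clique E C \<and> is_indep E I"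

definition is_split_graph :: "nat \<Rightarrow> nat set set \<Rightarrow> bool" where
  "is_split_graph n E \<longleftrightarrow> (\<exists>C I. split_partition n E C I)"

definition questioning_set :: "nat \<Rightarrow> nat set set \<Rightarrow> nat set" where
  "questioning_set n E =
     {v. (\<exists>C I. split_partition n E C I \<and> v \<in> C) \<and> (\<exists>C I. split_partition n E C I \<and> v \<in> I)}"

end

theory Submission
  imports Defs "HOL-Library.FuncSet"
begin

text \<open>Fix a split partition \<open>(C, I)\<close> with \<open>|C|\<close> maximal. An exchange argument shows that the
  questioning set \<open>Q\<close> either lies in \<open>C\<close>, and is then a clique, or is independent; for
  \<open>|Q| \<ge> 2\<close> the two cases exclude each other. Complementation swaps the two sides of every
  split partition, so it preserves \<open>Q\<close> and matches the two cases bijectively, which gives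
  the factor 2. In the clique case the graph is determined by \<open>Q\<close>, by \<open>K = C - Q\<close> and by
  a nonempty neighbourhood in \<open>I = [n] - Q - K\<close> for each vertex of \<open>K\<close>, while vertices of
  \<open>Q\<close> have no neighbour in \<open>I\<close>; conversely every such choice yields a split graph with
  questioning set \<open>Q\<close>. With \<open>|Q| = q\<close> and \<open>|K| = c\<close> there are
  \<open>(n choose q) * ((n - q) choose c) * (2 ^ (n - q - c) - 1) ^ c\<close> such choices.\<close>

lemma doubleton_in_all_edges_iff:
  "{u, v} \<in> all_edges n \<longleftrightarrow> u \<noteq> v \<and> u \<in> {1..n} \<and> v \<in> {1..n}"
  unfolding all_edges_def by (auto simp: doubleton_eq_iff)

lemma singleton_notin_all_edges: "{u} \<notin> all_edges n"
  unfolding all_edges_def by (auto simp: doubleton_eq_iff)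

lemma finite_all_edges: "finite (all_edges n)"
  by (rule finite_subset[of _ "Pow {1..n}"]) (auto simp: all_edges_def)

lemma card_ge_2_obtains:
  assumes "2 \<le> card A"
  obtains a b where "a \<in> A" "b \<in> A" "a \<noteq> b"
  using assms card_le_Suc0_iff_eq[of A] by (metis card.infinite not_less_eq_eq numeral_2_eq_2 zero_le)

lemma is_clique_subset: "is_clique E C \<Longrightarrow> D \<subseteq> C \<Longrightarrow> is_clique E D"
  unfolding is_clique_def by blast

lemma is_indep_subset: "is_indep E I \<Longrightarrow> J \<subseteq> I \<Longrightarrow> is_indep E J"
  unfolding is_indep_def by blast

lemma is_clique_insert:
  assumes "is_clique E C" "\<And>z. z \<in> C \<Longrightarrow> z \<noteq> a \<Longrightarrow> {a, z} \<in> E"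
  shows "is_clique E (insert a C)"
  using assms unfolding is_clique_def by (metis insert_commute insert_iff)

lemma is_indep_insert:
  assumes "E \<subseteq> all_edges n" "is_indep E I" "\<And>z. z \<in> I \<Longrightarrow> {a, z} \<notin> E"
  shows "is_indep E (insert a I)"
  using assms singleton_notin_all_edges unfolding is_indep_def
  by (metis insert_absorb2 insert_commute insert_iff subsetD)

lemma split_partition_parts:
  assumes "split_partition n E C I"
  shows "C \<subseteq> {1..n}" "I = {1..n} - C"
  using assms unfolding split_partition_def by auto

lemma split_partition_clique_edge:
  "split_partition n E C I \<Longrightarrow> u \<in> C \<Longrightarrow> v \<in> C \<Longrightarrow> u \<noteq> v \<Longrightarrow> {u, v} \<in> E"
  unfolding split_partition_def is_clique_def by auto

lemma split_partition_indep_nonedge: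
  "split_partition n E C I \<Longrightarrow> u \<in> I \<Longrightarrow> v \<in> I \<Longrightarrow> {u, v} \<notin> E"
  unfolding split_partition_def is_indep_def by auto

lemma split_partitions_cross_unique:
  assumes "split_partition n E C I" "split_partition n E C' I'"
    and "x \<in> C" "x \<in> I'" "z \<in> C" "z \<in> I'"
  shows "x = z"
  using assms split_partition_clique_edge split_partition_indep_nonedge by metis

lemma mem_questioning_set_iff:
  "v \<in> questioning_set n E \<longleftrightarrow>
     (\<exists>C I. split_partition n E C I \<and> v \<in> C) \<and> (\<exists>C I. split_partition n E C I \<and> v \<in> I)"
  unfolding questioning_set_def by simp

lemma questioning_set_subset: "questioning_set n E \<subseteq> {1..n}"
  unfolding questioning_set_def split_partition_def by auto

definition max_clique_partition :: "nat \<Rightarrow> nat set set \<Rightarrow> nat set \<Rightarrow> nat set \<Rightarrow> bool" where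
  "max_clique_partition n E C I \<longleftrightarrow>
     split_partition n E C I \<and> (\<forall>C' I'. split_partition n E C' I' \<longrightarrow> card C' \<le> card C)"

lemma max_clique_partition_exists:
  assumes "is_split_graph n E"
  obtains C I where "max_clique_partition n E C I"
proof -
  obtain C0 I0 where "split_partition n E C0 I0"
    using assms unfolding is_split_graph_def by blast
  moreover have "card C < Suc n" if "split_partition n E C I" for C I
    using card_mono[OF _ split_partition_parts(1)[OF that]] by (simp add: le_imp_less_Suc)
  ultimately have "\<exists>p. split_partition n E (fst p) (snd p) \<and>
      (\<forall>p'. split_partition n E (fst p') (snd p') \<longrightarrow> card (fst p') \<le> card (fst p))"
    by (intro ex_has_greatest_nat[of _ "(C0, I0)" _ "Suc n"]) auto
  then show ?thesis
    using that unfolding max_clique_partition_def by fastforce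
qed

text \<open>By maximality \<open>C \<not>\<subseteq> C'\<close>, which yields \<open>x\<close>; if \<open>y\<close> were adjacent to \<open>x\<close> as well,
  \<open>insert y C\<close> would be a larger clique.\<close>

lemma max_clique_partition_exchange:
  assumes mx: "max_clique_partition n E C I"
    and sp': "split_partition n E C' I'" and y: "y \<in> I" "y \<in> C'"
  obtains x where "x \<in> C" "x \<in> I'" "{y, x} \<notin> E" "\<And>z. z \<in> C \<Longrightarrow> z \<noteq> x \<Longrightarrow> {y, z} \<in> E"
proof -
  have sp: "split_partition n E C I" and max: "\<And>C' I'. split_partition n E C' I' \<Longrightarrow> card C' \<le> card C"
    using mx unfolding max_clique_partition_def by blast+
  note parts = split_partition_parts[OF sp] split_partition_parts[OF sp']
  have "\<not> C \<subseteq> C'"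
  proof
    assume "C \<subseteq> C'"
    with y parts have "C \<subset> C'" by blast
    then have "card C < card C'"
      using parts by (meson finite_atLeastAtMost finite_subset psubset_card_mono)
    with max[OF sp'] show False by simp
  qed
  then obtain x where x: "x \<in> C" "x \<in> I'" using parts by blast
  have adj: "{y, z} \<in> E" if "z \<in> C" "z \<noteq> x" for z
  proof -
    have "z \<in> C'"
      using split_partitions_cross_unique[OF sp sp' x that(1)] that parts by blast
    moreover have "y \<noteq> z" using y that parts by blast
    ultimately show ?thesis using split_partition_clique_edge[OF sp' y(2)] by blast
  qed
  have "{y, x} \<notin> E"
  proof
    assume "{y, x} \<in> E"
    with adj have "is_clique E (insert y C)"
      using sp unfolding split_partition_def by (metis is_clique_insert)
    then have "split_partition n E (insert y C) (I - {y})"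
      using sp y unfolding split_partition_def by (auto intro: is_indep_subset)
    moreover have "card (insert y C) = Suc (card C)"
      using y parts by (meson card_insert_disjoint finite_atLeastAtMost finite_subset DiffD2)
    ultimately show False using max by fastforce
  qed
  with x adj that show thesis by blast
qed

text \<open>With \<open>x\<close> from the exchange lemma, \<open>x\<close> is the only vertex of \<open>Q\<close> that can lie in \<open>C\<close>,
  and \<open>x\<close> has no neighbour in \<open>I\<close>; hence \<open>Q \<subseteq> insert x I\<close> is independent.\<close>

lemma questioning_set_indep_if_meets_indep_part:
  assumes E: "E \<subseteq> all_edges n" and mx: "max_clique_partition n E C I"
    and meets: "questioning_set n E \<inter> I \<noteq> {}"
  shows "is_indep E (questioning_set n E)"
proof -
  let ?Q = "questioning_set n E"
  have sp: "split_partition n E C I" using mx unfolding max_clique_partition_def by blast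
  note parts = split_partition_parts[OF sp]
  obtain y where yQ: "y \<in> ?Q" and yI: "y \<in> I" using meets by blast
  obtain C' I' where sp': "split_partition n E C' I'" and yC': "y \<in> C'"
    using yQ unfolding mem_questioning_set_iff by blast
  obtain x where x: "x \<in> C" "x \<in> I'" "{y, x} \<notin> E" and adj: "\<And>z. z \<in> C \<Longrightarrow> z \<noteq> x \<Longrightarrow> {y, z} \<in> E"
    using max_clique_partition_exchange[OF mx sp' yI yC'] by blast
  have "w = x" if wQ: "w \<in> ?Q" and wC: "w \<in> C" for w
  proof (rule ccontr)
    assume wx: "w \<noteq> x"
    obtain C'' I'' where sp'': "split_partition n E C'' I''" and wI'': "w \<in> I''"
      using wQ unfolding mem_questioning_set_iff by blast
    note parts'' = split_partition_parts[OF sp'']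
    have "y \<in> C''"
      using split_partition_indep_nonedge[OF sp'' _ wI''] adj[OF wC wx] yI parts parts'' by blast
    moreover have "x \<in> C''"
      using split_partitions_cross_unique[OF sp sp'' x(1) _ wC wI''] wx x(1) parts parts'' by blast
    moreover have "y \<noteq> x" using yI x(1) parts by blast
    ultimately show False using split_partition_clique_edge[OF sp''] x(3) by blast
  qed
  then have "?Q \<subseteq> insert x I" using questioning_set_subset parts by blast
  moreover have "{x, z} \<notin> E" if "z \<in> I" for z
  proof (cases "z = y")
    case True
    then show ?thesis using x(3) by (simp add: insert_commute)
  next
    case False
    then have "z \<in> I'"
      using split_partitions_cross_unique[OF sp' sp yC' yI _ that] that
        split_partition_parts[OF sp'] parts by blast
    then show ?thesis using split_partition_indep_nonedge[OF sp' x(2)] by blast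
  qed
  then have "is_indep E (insert x I)"
    using is_indep_insert[OF E] sp unfolding split_partition_def by blast
  ultimately show ?thesis by (rule is_indep_subset[rotated])
qed

lemma questioning_set_clique_or_indep:
  assumes "E \<subseteq> all_edges n" "is_split_graph n E"
  shows "is_clique E (questioning_set n E) \<or> is_indep E (questioning_set n E)"
proof -
  obtain C I where mx: "max_clique_partition n E C I"
    using max_clique_partition_exists[OF assms(2)] .
  then have sp: "split_partition n E C I" unfolding max_clique_partition_def by blast
  show ?thesis
  proof (cases "questioning_set n E \<inter> I = {}")
    case True
    then have "questioning_set n E \<subseteq> C"
      using questioning_set_subset split_partition_parts[OF sp] by blast
    then show ?thesis using sp unfolding split_partition_def by (blast intro: is_clique_subset)
  qed (use questioning_set_indep_if_meets_indep_part[OF assms(1) mx] in blast)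
qed

lemma not_clique_and_indep:
  assumes "is_clique E A" "is_indep E A" "2 \<le> card A"
  shows False
proof -
  obtain a b where "a \<in> A" "b \<in> A" "a \<noteq> b" using card_ge_2_obtains[OF assms(3)] .
  with assms(1,2) show False unfolding is_clique_def is_indep_def by blast
qed

text \<open>The form of a split graph whose questioning set \<open>Q\<close>, with \<open>|Q| \<ge> 2\<close>, is a clique:
  \<open>Q \<union> K\<close> is the clique part of a maximum-clique partition.\<close>

definition clique_shape :: "nat \<Rightarrow> nat set set \<Rightarrow> nat set \<Rightarrow> nat set \<Rightarrow> bool" where
  "clique_shape n E Q K \<longleftrightarrow>
     E \<subseteq> all_edges n \<and> Q \<subseteq> {1..n} \<and> K \<subseteq> {1..n} - Q \<and> 2 \<le> card Q
     \<and> is_clique E (Q \<union> K) \<and> is_indep E ({1..n} - Q - K)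
     \<and> (\<forall>x\<in>Q. \<forall>z\<in>{1..n} - Q - K. {x, z} \<notin> E)
     \<and> (\<forall>a\<in>K. \<exists>z\<in>{1..n} - Q - K. {a, z} \<in> E)"

lemma clique_shape_split_partition:
  "clique_shape n E Q K \<Longrightarrow> split_partition n E (Q \<union> K) ({1..n} - Q - K)"
  unfolding clique_shape_def split_partition_def by auto

lemma clique_shape_of_max_clique_partition:
  assumes E: "E \<subseteq> all_edges n" and mx: "max_clique_partition n E C I"
    and cl: "is_clique E (questioning_set n E)" and card: "2 \<le> card (questioning_set n E)"
  shows "clique_shape n E (questioning_set n E) (C - questioning_set n E)"
proof -
  let ?Q = "questioning_set n E"
  have sp: "split_partition n E C I" using mx unfolding max_clique_partition_def by blast
  note parts = split_partition_parts[OF sp]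
  have "?Q \<inter> I = {}"
    using questioning_set_indep_if_meets_indep_part[OF E mx] not_clique_and_indep[OF cl _ card]
    by blast
  then have QC: "?Q \<subseteq> C" using questioning_set_subset parts by blast
  have rest: "{1..n} - ?Q - (C - ?Q) = I" using QC parts by blast
  have "{x, z} \<notin> E" if xQ: "x \<in> ?Q" and zI: "z \<in> I" for x z
  proof
    assume xz: "{x, z} \<in> E"
    obtain C' I' where sp': "split_partition n E C' I'" and xI': "x \<in> I'"
      using xQ unfolding mem_questioning_set_iff by blast
    have "z \<in> C'"
      using split_partition_indep_nonedge[OF sp' xI'] xz zI parts split_partition_parts[OF sp'] by blast
    then have "z \<in> ?Q" using sp sp' zI unfolding mem_questioning_set_iff by blast
    then show False using zI \<open>?Q \<inter> I = {}\<close> by blast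
  qed
  moreover have "\<exists>z\<in>I. {a, z} \<in> E" if aCQ: "a \<in> C - ?Q" for a
  proof (rule ccontr)
    assume "\<not> (\<exists>z\<in>I. {a, z} \<in> E)"
    then have "is_indep E (insert a I)"
      using is_indep_insert[OF E] sp unfolding split_partition_def by blast
    then have "split_partition n E (C - {a}) (insert a I)"
      using sp aCQ unfolding split_partition_def by (auto intro: is_clique_subset)
    then have "a \<in> ?Q" using sp aCQ unfolding mem_questioning_set_iff by blast
    then show False using aCQ by blast
  qed
  moreover have "?Q \<union> (C - ?Q) = C" "C - ?Q \<subseteq> {1..n} - ?Q" using QC parts by blast+
  ultimately show ?thesis
    using E card sp questioning_set_subset
    unfolding clique_shape_def rest split_partition_def by simp
qed

lemma clique_shape_subset_questioning_set:
  assumes sh: "clique_shape n E Q K"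
  shows "Q \<subseteq> questioning_set n E"
proof
  fix x assume xQ: "x \<in> Q"
  have E: "E \<subseteq> all_edges n" and QK: "Q \<subseteq> {1..n}" "K \<subseteq> {1..n} - Q" and cl: "is_clique E (Q \<union> K)"
    and QI: "\<And>z. z \<in> {1..n} - Q - K \<Longrightarrow> {x, z} \<notin> E"
    using sh xQ unfolding clique_shape_def by blast+
  have sp: "split_partition n E (Q \<union> K) ({1..n} - Q - K)"
    using clique_shape_split_partition[OF sh] .
  have "is_indep E (insert x ({1..n} - Q - K))"
    using is_indep_insert[OF E] sp QI unfolding split_partition_def by blast
  then have "split_partition n E (Q \<union> K - {x}) (insert x ({1..n} - Q - K))"
    using QK xQ cl unfolding split_partition_def by (auto intro: is_clique_subset)
  with sp xQ show "x \<in> questioning_set n E" unfolding mem_questioning_set_iff by blast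
qed

lemma questioning_set_subset_clique_shape:
  assumes sh: "clique_shape n E Q K"
  shows "questioning_set n E \<subseteq> Q"
proof
  have Q: "Q \<subseteq> {1..n}" "2 \<le> card Q" and cl: "is_clique E (Q \<union> K)"
    and QI: "\<And>x z. x \<in> Q \<Longrightarrow> z \<in> {1..n} - Q - K \<Longrightarrow> {x, z} \<notin> E"
    and KI: "\<And>a. a \<in> K \<Longrightarrow> \<exists>z\<in>{1..n} - Q - K. {a, z} \<in> E"
    using sh unfolding clique_shape_def by blast+
  have clQK: "{u, w} \<in> E" if "u \<in> Q \<union> K" "w \<in> Q \<union> K" "u \<noteq> w" for u w
    using cl that unfolding is_clique_def by blast
  obtain a b where ab: "a \<in> Q" "b \<in> Q" "a \<noteq> b" using card_ge_2_obtains[OF Q(2)] .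
  fix v assume vq: "v \<in> questioning_set n E"
  obtain C' I' where sp1: "split_partition n E C' I'" and vC': "v \<in> C'"
    using vq unfolding mem_questioning_set_iff by blast
  obtain C'' I'' where sp2: "split_partition n E C'' I''" and vI'': "v \<in> I''"
    using vq unfolding mem_questioning_set_iff by blast
  note parts = split_partition_parts[OF sp1] split_partition_parts[OF sp2]
  show "v \<in> Q"
  proof (rule ccontr)
    assume vQ: "v \<notin> Q"
    show False
    proof (cases "v \<in> K")
      case True
      txt \<open>A neighbour \<open>y \<notin> Q \<union> K\<close> of \<open>v\<close> and \<open>a\<close> are both adjacent to \<open>v \<in> I''\<close>, so both
        lie in \<open>C''\<close>; but \<open>a \<in> Q\<close> has no neighbour outside \<open>Q \<union> K\<close>.\<close>
      obtain y where y: "y \<in> {1..n} - Q - K" "{v, y} \<in> E" using KI[OF True] by blast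
      have "y \<in> C''"
        using split_partition_indep_nonedge[OF sp2 vI''] y parts by blast
      moreover have "a \<in> C''"
        using split_partition_indep_nonedge[OF sp2 _ vI''] clQK[of a v] ab(1) True vQ Q parts
        by blast
      ultimately show False
        using split_partition_clique_edge[OF sp2] QI[OF ab(1) y(1)] ab(1) y(1) by blast
    next
      case False
      txt \<open>Then \<open>v\<close> has no neighbour in \<open>Q\<close>, so \<open>a, b \<in> I'\<close>, contradicting \<open>{a, b} \<in> E\<close>.\<close>
      then have "v \<in> {1..n} - Q - K" using vq questioning_set_subset vQ by blast
      then have "a \<in> I'" "b \<in> I'"
        using split_partition_clique_edge[OF sp1 _ vC'] QI ab vQ Q parts by blast+
      then show False
        using split_partition_indep_nonedge[OF sp1] clQK[of a b] ab by blast
    qed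
  qed
qed

lemma questioning_set_clique_shape:
  "clique_shape n E Q K \<Longrightarrow> questioning_set n E = Q"
  using clique_shape_subset_questioning_set questioning_set_subset_clique_shape by blast

lemma clique_shape_extra_part:
  assumes sh: "clique_shape n E Q K"
  shows "K = {v \<in> {1..n} - Q. \<exists>q\<in>Q. {v, q} \<in> E}"
proof -
  have Q: "2 \<le> card Q" and K: "K \<subseteq> {1..n} - Q" and cl: "is_clique E (Q \<union> K)"
    and QI: "\<And>x z. x \<in> Q \<Longrightarrow> z \<in> {1..n} - Q - K \<Longrightarrow> {x, z} \<notin> E"
    using sh unfolding clique_shape_def by blast+
  obtain a where a: "a \<in> Q" using Q card_ge_2_obtains by blast
  show ?thesis
  proof (intro equalityI subsetI)
    fix v assume vK: "v \<in> K"
    then have "v \<noteq> a" using a K by blast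
    then have "{v, a} \<in> E" using cl a vK unfolding is_clique_def by simp
    with vK show "v \<in> {v \<in> {1..n} - Q. \<exists>q\<in>Q. {v, q} \<in> E}" using a K by blast
  next
    fix v assume "v \<in> {v \<in> {1..n} - Q. \<exists>q\<in>Q. {v, q} \<in> E}"
    then obtain q where "v \<in> {1..n} - Q" "q \<in> Q" "{v, q} \<in> E" by blast
    then show "v \<in> K" using QI[of q v] by (metis Diff_iff insert_commute)
  qed
qed

text \<open>\<open>N z\<close> is the neighbourhood of \<open>z \<in> K\<close> in the independent part \<open>{1..n} - Q - K\<close>.\<close>

definition clique_shape_graph :: "nat set \<Rightarrow> nat set \<Rightarrow> (nat \<Rightarrow> nat set) \<Rightarrow> nat set set" where
  "clique_shape_graph Q K N =
     {{u, v} | u v. u \<noteq> v \<and> u \<in> Q \<union> K \<and> v \<in> Q \<union> K} \<union> {{z, y} | z y. z \<in> K \<and> y \<in> N z}"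

lemma clique_shape_graph_edge_cases:
  assumes "{u, v} \<in> clique_shape_graph Q K N"
  shows "u \<in> Q \<union> K \<and> v \<in> Q \<union> K \<or> u \<in> K \<or> v \<in> K"
  using assms unfolding clique_shape_graph_def by (auto simp: doubleton_eq_iff)

lemma cross_edge_in_clique_shape_graph_iff:
  assumes "z \<in> K" "y \<notin> Q \<union> K"
  shows "{z, y} \<in> clique_shape_graph Q K N \<longleftrightarrow> y \<in> N z"
  using assms unfolding clique_shape_graph_def by (auto simp: doubleton_eq_iff)

lemma clique_shape_clique_shape_graph:
  assumes Q: "Q \<subseteq> {1..n}" "2 \<le> card Q" and K: "K \<subseteq> {1..n} - Q"
    and N: "N \<in> K \<rightarrow>\<^sub>E Pow ({1..n} - Q - K) - {{}}"
  shows "clique_shape n (clique_shape_graph Q K N) Q K"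
proof -
  let ?G = "clique_shape_graph Q K N"
  have N_sub: "N z \<subseteq> {1..n} - Q - K" and N_ne: "N z \<noteq> {}" if "z \<in> K" for z
    using N that by auto
  have "{u, v} \<in> all_edges n" if "u \<in> Q \<union> K" "v \<in> Q \<union> K \<union> (\<Union>z\<in>K. N z)" "u \<noteq> v" for u v
    unfolding doubleton_in_all_edges_iff using that Q K N_sub by blast
  then have "?G \<subseteq> all_edges n"
    unfolding clique_shape_graph_def using N_sub by blast
  moreover have "is_clique ?G (Q \<union> K)"
    unfolding is_clique_def clique_shape_graph_def by blast
  moreover have "is_indep ?G ({1..n} - Q - K)"
    unfolding is_indep_def by (blast dest: clique_shape_graph_edge_cases)
  moreover have "\<forall>x\<in>Q. \<forall>z\<in>{1..n} - Q - K. {x, z} \<notin> ?G"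
    using K by (blast dest: clique_shape_graph_edge_cases)
  moreover have "\<forall>a\<in>K. \<exists>z\<in>{1..n} - Q - K. {a, z} \<in> ?G"
  proof
    fix a assume a: "a \<in> K"
    then obtain z where z: "z \<in> N a" using N_ne by blast
    then have "z \<in> {1..n} - Q - K" using N_sub[OF a] by blast
    moreover from this have "{a, z} \<in> ?G"
      using z cross_edge_in_clique_shape_graph_iff[OF a, of z] by blast
    ultimately show "\<exists>z\<in>{1..n} - Q - K. {a, z} \<in> ?G" by blast
  qed
  ultimately show ?thesis using Q K unfolding clique_shape_def by (intro conjI)
qed

lemma clique_shape_eq_clique_shape_graph:
  assumes sh: "clique_shape n E Q K"
  shows "E = clique_shape_graph Q K (\<lambda>z\<in>K. {y \<in> {1..n} - Q - K. {z, y} \<in> E})"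
    (is "E = clique_shape_graph Q K ?N")
proof -
  have E: "E \<subseteq> all_edges n" and cl: "is_clique E (Q \<union> K)"
    and ind: "is_indep E ({1..n} - Q - K)"
    and QI: "\<And>x z. x \<in> Q \<Longrightarrow> z \<in> {1..n} - Q - K \<Longrightarrow> {x, z} \<notin> E"
    using sh unfolding clique_shape_def by blast+
  have "{u, v} \<in> clique_shape_graph Q K ?N"
    if "{u, v} \<in> E" "u \<in> Q \<union> K" "u \<noteq> v" "v \<in> {1..n}" for u v
  proof (cases "v \<in> Q \<union> K")
    case True
    then show ?thesis using that unfolding clique_shape_graph_def by blast
  next
    case False
    with that QI have "u \<in> K" by blast
    with False that show ?thesis by (simp add: cross_edge_in_clique_shape_graph_iff)
  qed
  note edge_in_graph = this
  have "e \<in> clique_shape_graph Q K ?N" if "e \<in> E" for e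
  proof -
    obtain u v where e: "e = {u, v}" "u \<noteq> v" "u \<in> {1..n}" "v \<in> {1..n}"
      using E \<open>e \<in> E\<close> unfolding all_edges_def by blast
    consider "u \<in> Q \<union> K" | "v \<in> Q \<union> K" | "u \<in> {1..n} - Q - K" "v \<in> {1..n} - Q - K"
      using e by blast
    then show ?thesis
    proof cases
      case 1
      then show ?thesis using edge_in_graph[of u v] e that by blast
    next
      case 2
      then show ?thesis using edge_in_graph[of v u] e that by (simp add: insert_commute)
    next
      case 3
      then show ?thesis using ind e that unfolding is_indep_def by blast
    qed
  qed
  moreover have "clique_shape_graph Q K ?N \<subseteq> E"
    using cl unfolding clique_shape_graph_def is_clique_def by auto
  ultimately show ?thesis by blast
qed

lemma card_clique_shape:
  assumes Q: "Q \<subseteq> {1..n}" "2 \<le> card Q" and K: "K \<subseteq> {1..n} - Q"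
  shows "card {E. clique_shape n E Q K} = (2 ^ (n - card Q - card K) - 1) ^ card K"
proof -
  define I where "I = {1..n} - Q - K"
  define D where "D = K \<rightarrow>\<^sub>E Pow I - {{}}"
  have nbhd_eq: "N z = {y \<in> I. {z, y} \<in> clique_shape_graph Q K N}" if "N \<in> D" "z \<in> K" for N z
  proof -
    have "N z \<subseteq> I" using PiE_mem[OF that[unfolded D_def]] by blast
    then show ?thesis using cross_edge_in_clique_shape_graph_iff[OF that(2)] unfolding I_def by blast
  qed
  have "inj_on (clique_shape_graph Q K) D"
  proof (rule inj_onI)
    fix N N' assume N: "N \<in> D" "N' \<in> D" and eq: "clique_shape_graph Q K N = clique_shape_graph Q K N'"
    show "N = N'"
      using N[unfolded D_def]
    proof (rule PiE_ext)
      fix z assume z: "z \<in> K"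
      show "N z = N' z" by (simp only: nbhd_eq[OF N(1) z] nbhd_eq[OF N(2) z] eq)
    qed
  qed
  moreover have "{E. clique_shape n E Q K} = clique_shape_graph Q K ` D"
  proof (intro equalityI subsetI)
    fix E assume "E \<in> {E. clique_shape n E Q K}"
    then have sh: "clique_shape n E Q K" by simp
    then have "{y \<in> I. {z, y} \<in> E} \<in> Pow I - {{}}" if "z \<in> K" for z
      using that unfolding clique_shape_def I_def by blast
    then have "(\<lambda>z\<in>K. {y \<in> I. {z, y} \<in> E}) \<in> D"
      unfolding D_def restrict_PiE_iff by blast
    then show "E \<in> clique_shape_graph Q K ` D"
      using clique_shape_eq_clique_shape_graph[OF sh] unfolding I_def by blast
  qed (use clique_shape_clique_shape_graph[OF Q K] D_def I_def in blast)
  ultimately have "card {E. clique_shape n E Q K} = card D"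
    by (simp add: card_image)
  also have "\<dots> = (2 ^ card I - 1) ^ card K"
  proof -
    have fin: "finite K" "finite I" using K unfolding I_def by (auto intro: finite_subset)
    then have "card (Pow I - {{}}) = 2 ^ card I - 1" by (simp add: card_Pow)
    with fin show ?thesis by (simp add: D_def card_PiE)
  qed
  also have "card I = n - card Q - card K"
  proof -
    have "card ({1..n} - Q) = n - card Q" using Q by (simp add: card_Diff_subset finite_subset)
    then show ?thesis using K unfolding I_def by (simp add: card_Diff_subset finite_subset)
  qed
  finally show ?thesis .
qed

lemma split_graph_questioning_clique_iff_clique_shape:
  "(E \<subseteq> all_edges n \<and> is_split_graph n E \<and> 2 \<le> card (questioning_set n E)
      \<and> is_clique E (questioning_set n E)) \<longleftrightarrow> (\<exists>Q K. clique_shape n E Q K)"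
proof
  assume E: "E \<subseteq> all_edges n \<and> is_split_graph n E \<and> 2 \<le> card (questioning_set n E)
      \<and> is_clique E (questioning_set n E)"
  then obtain C I where "max_clique_partition n E C I"
    using max_clique_partition_exists by blast
  with E show "\<exists>Q K. clique_shape n E Q K"
    using clique_shape_of_max_clique_partition by blast
next
  assume "\<exists>Q K. clique_shape n E Q K"
  then obtain Q K where sh: "clique_shape n E Q K" by blast
  then have "is_clique E Q" "E \<subseteq> all_edges n" "2 \<le> card Q"
    unfolding clique_shape_def by (auto intro: is_clique_subset)
  with sh show "E \<subseteq> all_edges n \<and> is_split_graph n E \<and> 2 \<le> card (questioning_set n E)
      \<and> is_clique E (questioning_set n E)"
    using clique_shape_split_partition questioning_set_clique_shape
    unfolding is_split_graph_def by metis
qed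

lemma card_clique_shaped:
  "card {E. \<exists>Q K. clique_shape n E Q K} =
     (\<Sum>Q | Q \<subseteq> {1..n} \<and> 2 \<le> card Q. \<Sum>K\<in>Pow ({1..n} - Q). (2 ^ (n - card Q - card K) - 1) ^ card K)"
proof -
  define Qs where "Qs = {Q. Q \<subseteq> {1..n} \<and> 2 \<le> card Q}"
  define P where "P = Sigma Qs (\<lambda>Q. Pow ({1..n} - Q))"
  define T where "T = (\<lambda>p. {E. clique_shape n E (fst p) (snd p)})"
  have finQs: "finite Qs" unfolding Qs_def by (rule finite_subset[of _ "Pow {1..n}"]) auto
  have finT: "finite (T p)" for p
    by (rule finite_subset[of _ "Pow (all_edges n)"])
       (auto simp: T_def clique_shape_def finite_all_edges)
  have "(Q, K) \<in> P" if "clique_shape n E Q K" for E Q K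
    using that unfolding clique_shape_def P_def Qs_def by blast
  then have "{E. \<exists>Q K. clique_shape n E Q K} = (\<Union>p \<in> P. T p)"
    unfolding T_def by force
  moreover have "T p \<inter> T p' = {}" if "p \<noteq> p'" for p p'
  proof -
    have "p = p'" if "clique_shape n E (fst p) (snd p)" "clique_shape n E (fst p') (snd p')" for E
      using questioning_set_clique_shape[OF that(1)] questioning_set_clique_shape[OF that(2)]
        clique_shape_extra_part[OF that(1)] clique_shape_extra_part[OF that(2)]
      by (simp add: prod_eq_iff)
    with \<open>p \<noteq> p'\<close> show ?thesis unfolding T_def by blast
  qed
  ultimately have "card {E. \<exists>Q K. clique_shape n E Q K} = (\<Sum>p \<in> P. card (T p))"
    using finQs finT unfolding P_def by (simp add: card_UN_disjoint)
  also have "\<dots> = (\<Sum>Q\<in>Qs. \<Sum>K\<in>Pow ({1..n} - Q). card (T (Q, K)))"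
    using finQs unfolding P_def by (simp add: sum.Sigma)
  also have "\<dots> = (\<Sum>Q\<in>Qs. \<Sum>K\<in>Pow ({1..n} - Q). (2 ^ (n - card Q - card K) - 1) ^ card K)"
    by (intro sum.cong refl) (simp add: T_def Qs_def card_clique_shape)
  finally show ?thesis unfolding Qs_def .
qed

lemma sum_Pow_by_card:
  fixes h :: "nat \<Rightarrow> nat"
  assumes "finite X"
  shows "(\<Sum>A\<in>Pow X. h (card A)) = (\<Sum>k = 0..card X. (card X choose k) * h k)"
proof -
  have "(\<Sum>A\<in>Pow X. h (card A)) = (\<Sum>k = 0..card X. \<Sum>A | A \<in> Pow X \<and> card A = k. h (card A))"
    using assms by (intro sum.group[symmetric]) (auto intro: card_mono)
  also have "\<dots> = (\<Sum>k = 0..card X. card {A. A \<subseteq> X \<and> card A = k} * h k)"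
    by (intro sum.cong refl) (simp cong: conj_cong)
  finally show ?thesis using n_subsets[OF assms] by simp
qed

lemma sum_clique_shape_counts:
  "(\<Sum>Q | Q \<subseteq> {1..n} \<and> 2 \<le> card Q. \<Sum>K\<in>Pow ({1..n} - Q). (2 ^ (n - card Q - card K) - 1) ^ card K)
     = (\<Sum>q = 2..n. \<Sum>c = 0..n - q. (n choose q) * ((n - q) choose c) * (2 ^ (n - c - q) - 1) ^ c)"
proof -
  define F where "F q = (\<Sum>c = 0..n - q. ((n - q) choose c) * (2 ^ (n - q - c) - 1) ^ c)" for q
  have "(\<Sum>K\<in>Pow ({1..n} - Q). (2 ^ (n - card Q - card K) - 1) ^ card K) = F (card Q)"
    if "Q \<subseteq> {1..n}" for Q
  proof -
    have "card ({1..n} - Q) = n - card Q" using that by (simp add: card_Diff_subset finite_subset)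
    then show ?thesis
      using sum_Pow_by_card[of "{1..n} - Q" "\<lambda>k. (2 ^ (n - card Q - k) - 1) ^ k"]
      unfolding F_def by simp
  qed
  then have "(\<Sum>Q | Q \<subseteq> {1..n} \<and> 2 \<le> card Q. \<Sum>K\<in>Pow ({1..n} - Q). (2 ^ (n - card Q - card K) - 1) ^ card K)
      = (\<Sum>Q\<in>Pow {1..n}. if 2 \<le> card Q then F (card Q) else 0)"
    by (simp add: sum.If_cases Pow_def Collect_conj_eq Int_commute)
  also have "\<dots> = (\<Sum>q = 0..n. (n choose q) * (if 2 \<le> q then F q else 0))"
    using sum_Pow_by_card[of "{1..n}" "\<lambda>q. if 2 \<le> q then F q else 0"] by simp
  also have "\<dots> = (\<Sum>q = 2..n. (n choose q) * F q)"
    by (rule sum.mono_neutral_cong_right) auto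
  finally show ?thesis
    unfolding F_def by (simp add: sum_distrib_left mult.assoc add.commute)
qed

lemma is_clique_complement_iff:
  "E \<subseteq> all_edges n \<Longrightarrow> C \<subseteq> {1..n} \<Longrightarrow> is_clique (all_edges n - E) C \<longleftrightarrow> is_indep E C"
  unfolding is_clique_def is_indep_def using singleton_notin_all_edges
  by (auto simp: doubleton_in_all_edges_iff subset_iff)

lemma is_indep_complement_iff:
  "C \<subseteq> {1..n} \<Longrightarrow> is_indep (all_edges n - E) C \<longleftrightarrow> is_clique E C"
  unfolding is_clique_def is_indep_def by (auto simp: doubleton_in_all_edges_iff subset_iff)

lemma split_partition_complement_iff:
  assumes "E \<subseteq> all_edges n"
  shows "split_partition n (all_edges n - E) C I \<longleftrightarrow> split_partition n E I C"
proof -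
  have "split_partition n (all_edges n - E) C I \<longleftrightarrow> split_partition n E I C"
    if "C \<subseteq> {1..n}" "I \<subseteq> {1..n}"
    using is_clique_complement_iff[OF assms that(1)] is_indep_complement_iff[OF that(2)]
    unfolding split_partition_def by blast
  then show ?thesis unfolding split_partition_def by blast
qed

lemma questioning_set_complement:
  assumes "E \<subseteq> all_edges n"
  shows "questioning_set n (all_edges n - E) = questioning_set n E"
  unfolding questioning_set_def split_partition_complement_iff[OF assms] by blast

lemma is_split_graph_complement:
  assumes "E \<subseteq> all_edges n"
  shows "is_split_graph n (all_edges n - E) \<longleftrightarrow> is_split_graph n E"
  unfolding is_split_graph_def split_partition_complement_iff[OF assms] by blast

lemma card_questioning_indep_eq_card_questioning_clique:
  "card {E. E \<subseteq> all_edges n \<and> is_split_graph n E \<and> 2 \<le> card (questioning_set n E)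
            \<and> is_indep E (questioning_set n E)}
   = card {E. E \<subseteq> all_edges n \<and> is_split_graph n E \<and> 2 \<le> card (questioning_set n E)
            \<and> is_clique E (questioning_set n E)}"
    (is "card (?S is_indep) = card (?S is_clique)")
proof (rule bij_betw_same_card)
  have compl: "E \<in> ?S is_indep \<longleftrightarrow> all_edges n - E \<in> ?S is_clique" if "E \<subseteq> all_edges n" for E
    using that questioning_set_subset[of n E]
    by (simp add: questioning_set_complement is_split_graph_complement is_clique_complement_iff)
  have involutive: "all_edges n - (all_edges n - E) = E" if "E \<subseteq> all_edges n" for E
    using that by blast
  show "bij_betw (\<lambda>E. all_edges n - E) (?S is_indep) (?S is_clique)"
  proof (rule bij_betw_byWitness[where f' = "\<lambda>E. all_edges n - E"])
    show "(\<lambda>E. all_edges n - E) ` ?S is_clique \<subseteq> ?S is_indep"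
    proof
      fix E' assume "E' \<in> (\<lambda>E. all_edges n - E) ` ?S is_clique"
      then obtain E where E: "E \<in> ?S is_clique" and E': "E' = all_edges n - E" by blast
      have "all_edges n - E' = E" using E involutive unfolding E' by blast
      with E have "all_edges n - E' \<in> ?S is_clique" by simp
      then show "E' \<in> ?S is_indep" using compl[of E'] unfolding E' by blast
    qed
  qed (use compl involutive in auto)
qed

theorem lemma8p6:
  fixes n :: nat
  shows "card {E. E \<subseteq> all_edges n \<and> is_split_graph n E \<and> card (questioning_set n E) \<ge> 2}
    = 2 * (\<Sum>q = 2..n. \<Sum>c = 0..n - q.
             (n choose q) * ((n - q) choose c) * (2 ^ (n - c - q) - 1) ^ c)"
proof -
  let ?S = "\<lambda>P. {E. E \<subseteq> all_edges n \<and> is_split_graph n E \<and> 2 \<le> card (questioning_set n E)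
                  \<and> P E (questioning_set n E)}"
  have "{E. E \<subseteq> all_edges n \<and> is_split_graph n E \<and> card (questioning_set n E) \<ge> 2}
      = ?S is_clique \<union> ?S is_indep"
    using questioning_set_clique_or_indep by blast
  moreover have "?S is_clique \<inter> ?S is_indep = {}"
    using not_clique_and_indep by blast
  moreover have "finite (?S P)" for P
    by (rule finite_subset[of _ "Pow (all_edges n)"]) (auto simp: finite_all_edges)
  ultimately have "card {E. E \<subseteq> all_edges n \<and> is_split_graph n E \<and> card (questioning_set n E) \<ge> 2}
      = card (?S is_clique) + card (?S is_indep)"
    by (simp add: card_Un_disjoint)
  also have "\<dots> = 2 * card {E. \<exists>Q K. clique_shape n E Q K}"
    unfolding card_questioning_indep_eq_card_questioning_clique
      split_graph_questioning_clique_iff_clique_shape by simp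
  finally show ?thesis
    by (simp only: card_clique_shaped sum_clique_shape_counts)
qed

end
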